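(* Let $b\ge2$ and $s\ge1$ be integers, and let $M_s(b)$ be the number of tuples $(d_1,\dots,d_s)\in\mathbb N^s$ with $d_1\ge d_2\ge\cdots\ge d_s\ge1$, $d_1\ge2$ and $d_1\cdots d_s=b$. Then $M_s(b)\le b^{\log_2\log_2 b}$. *)

theory Defs
  imports "HOL-Analysis.Analysis"
begin

text \<open>Tuples (d_1,...,d_s) are represented as lists ds of length s, with ds ! 0 = d_1.\<close>
definition M :: "nat \<Rightarrow> nat \<Rightarrow> nat" where
  "M s b = card {ds :: nat list. length ds = s \<and> sorted_wrt (\<ge>) ds \<and>
                 (\<forall>d\<in>set ds. d \<ge> 1) \<and> ds ! 0 \<ge> 2 \<and> prod_list ds = b}"

end

theory Submission
  imports Defs "HOL-Library.Multiset"
begin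

text \<open>Dropping the entries equal to 1 turns an admissible tuple into an unordered factorisation
  of \<open>b\<close> into factors \<open>\<ge> 2\<close>; the tuple is recovered from it, since it is sorted and of known
  length. Such a factorisation has at most \<open>k\<close> factors when \<open>b < 2^(k+1)\<close>, and every
  factorisation of \<open>p c\<close>, \<open>p\<close> prime, arises from one of \<open>c\<close> by multiplying one of its factors,
  or the empty factor 1, by \<open>p\<close>. Peeling off the prime factors one at a time therefore bounds
  the number of factorisations by \<open>k^k\<close> with \<open>k = \<lfloor>log\<^sub>2 b\<rfloor>\<close>, and
  \<open>k^k \<le> (log\<^sub>2 b) powr (log\<^sub>2 b) = b powr (log\<^sub>2 (log\<^sub>2 b))\<close>.\<close>

definition factorisations :: "nat \<Rightarrow> nat multiset set" where
  "factorisations b = {A. (\<forall>x\<in>#A. 2 \<le> x) \<and> prod_mset A = b}"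

lemma two_power_size_le_prod_mset:
  fixes A :: "nat multiset"
  assumes "\<forall>x\<in>#A. 2 \<le> x"
  shows "2 ^ size A \<le> prod_mset A"
  using assms
proof (induction A)
  case (add x A)
  then show ?case by (simp add: mult_mono)
qed simp

lemma size_le_if_in_factorisations:
  assumes "A \<in> factorisations b" and "b < 2 ^ (k + 1)"
  shows "size A \<le> k"
proof -
  have "2 ^ size A < (2::nat) ^ (k + 1)"
    using two_power_size_le_prod_mset assms by (fastforce simp: factorisations_def)
  then have "size A < k + 1" by (rule power_less_imp_less_exp[rotated]) simp
  then show ?thesis by simp
qed

lemma finite_factorisations:
  assumes "b \<ge> 1"
  shows "finite (factorisations b)"
proof (rule finite_subset)
  show "factorisations b \<subseteq> (\<Union>n\<le>b. multisets_of_size {..b} n)"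
  proof
    fix A assume A: "A \<in> factorisations b"
    have "x \<le> b" if "x \<in># A" for x
      using that A assms by (auto simp: factorisations_def intro!: dvd_imp_le dvd_prod_mset)
    moreover have "size A \<le> b"
      using size_le_if_in_factorisations[OF A] less_exp[of "b + 1"] by simp
    ultimately show "A \<in> (\<Union>n\<le>b. multisets_of_size {..b} n)"
      by (auto simp: multisets_of_size_def)
  qed
qed (simp add: finite_multisets_of_size)

text \<open>Choosing the factor \<open>y = 1\<close>, which does not occur in \<open>A\<close>, adjoins \<open>p\<close> as a new factor.\<close>

lemma factorisations_mult_prime_subset:
  assumes "prime p"
  shows "factorisations (p * c) \<subseteq>
    (\<lambda>(A, y). A - {#y#} + {#y * p#}) ` Sigma (factorisations c) (\<lambda>A. insert 1 (set_mset A))"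
proof
  fix B assume B: "B \<in> factorisations (p * c)"
  then have factors_ge_2: "\<forall>x\<in>#B. 2 \<le> x" and prod_B: "prod_mset B = p * c"
    by (auto simp: factorisations_def)
  obtain x where x: "x \<in># B" "p dvd x"
    using prod_B assms by (metis dvd_triv_left prime_dvd_prod_mset_iff)
  then obtain m where x_eq: "x = p * m" by blast
  have "m \<ge> 1" using x_eq x(1) factors_ge_2 by (cases m) auto
  have "prod_mset (B - {#x#}) * m = c"
  proof -
    have "p * (prod_mset (B - {#x#}) * m) = p * c"
      using prod_B prod_mset.remove[OF x(1)] x_eq by (simp add: algebra_simps)
    then show ?thesis using prime_gt_0_nat[OF assms] by simp
  qed
  define A where "A = (if m = 1 then B - {#x#} else B - {#x#} + {#m#})"
  have "A \<in> factorisations c"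
    using \<open>prod_mset (B - {#x#}) * m = c\<close> \<open>m \<ge> 1\<close> factors_ge_2
    by (auto simp: A_def factorisations_def dest: in_diffD)
  moreover have "m \<in> insert 1 (set_mset A)" by (simp add: A_def)
  moreover have "A - {#m#} + {#m * p#} = B"
  proof (cases "m = 1")
    case True
    have "1 \<notin># A" using factors_ge_2 True by (force simp: A_def dest: in_diffD)
    then have "A - {#m#} = A" using True by (simp add: diff_single_trivial)
    then show ?thesis using True x(1) x_eq by (simp add: A_def)
  qed (use x(1) x_eq in \<open>simp add: A_def mult.commute\<close>)
  ultimately show "B \<in> (\<lambda>(A, y). A - {#y#} + {#y * p#}) `
      Sigma (factorisations c) (\<lambda>A. insert 1 (set_mset A))"
    by force
qed

lemma card_set_mset_le_size: "card (set_mset A) \<le> size A"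
  by (metis card_length ex_mset set_mset_mset size_mset)

lemma card_factorisations_mult_prime_le:
  assumes "prime p" and "c \<ge> 1" and "c < 2 ^ (k + 1)"
  shows "card (factorisations (p * c)) \<le> (k + 1) * card (factorisations c)"
proof -
  let ?choices = "Sigma (factorisations c) (\<lambda>A. insert 1 (set_mset A))"
  have finite_choices: "finite ?choices"
    using finite_factorisations[OF \<open>c \<ge> 1\<close>] by auto
  have "card (factorisations (p * c)) \<le> card ?choices"
    using factorisations_mult_prime_subset[OF \<open>prime p\<close>] finite_choices
    by (meson card_image_le card_mono finite_imageI le_trans)
  also have "\<dots> = (\<Sum>A\<in>factorisations c. card (insert 1 (set_mset A)))"
    using finite_factorisations[OF \<open>c \<ge> 1\<close>] by simp
  also have "\<dots> \<le> (\<Sum>A\<in>factorisations c. k + 1)"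
  proof (rule sum_mono)
    fix A assume "A \<in> factorisations c"
    have "card (insert 1 (set_mset A)) \<le> size A + 1"
      using card_set_mset_le_size[of A] card_insert_le_m1 by (simp add: card_insert_if)
    then show "card (insert 1 (set_mset A)) \<le> k + 1"
      using size_le_if_in_factorisations[OF \<open>A \<in> factorisations c\<close> assms(3)] by simp
  qed
  finally show ?thesis by (simp add: mult.commute)
qed

lemma factorisations_1: "factorisations 1 = {{#}}"
proof -
  have "A = {#}" if "A \<in> factorisations 1" for A
    using size_le_if_in_factorisations[OF that, of 0] by simp
  then show ?thesis by (auto simp: factorisations_def)
qed

lemma card_factorisations_le:
  assumes "b \<ge> 1" and "b < 2 ^ (k + 1)"
  shows "card (factorisations b) \<le> k ^ k"
  using assms
proof (induction b arbitrary: k rule: less_induct)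
  case (less b)
  show ?case
  proof (cases "b = 1")
    case True
    then have "card (factorisations b) = 1" by (simp only: factorisations_1) simp
    then show ?thesis by (cases k) (auto simp: Suc_le_eq)
  next
    case False
    then obtain p where p: "prime p" "p dvd b" using prime_factor_nat by blast
    then obtain c where b_eq: "b = p * c" by blast
    have "2 * c \<le> b" using b_eq prime_ge_2_nat[OF \<open>prime p\<close>] by simp
    moreover have "c \<ge> 1" using b_eq less.prems(1) by (cases c) auto
    ultimately have "c < b" by simp
    have "k \<noteq> 0" using less.prems False by (cases k) auto
    then obtain j where k_eq: "k = j + 1" by (metis Suc_eq_plus1 not0_implies_Suc)
    have c_lt: "c < 2 ^ (j + 1)" using \<open>2 * c \<le> b\<close> less.prems(2) k_eq by simp
    have "card (factorisations b) \<le> (j + 1) * card (factorisations c)"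
      using card_factorisations_mult_prime_le[OF \<open>prime p\<close> \<open>c \<ge> 1\<close> c_lt] b_eq by simp
    also have "\<dots> \<le> (j + 1) * j ^ j"
      using less.IH[OF \<open>c < b\<close> \<open>c \<ge> 1\<close> c_lt] by (rule mult_le_mono2)
    also have "\<dots> \<le> (j + 1) * (j + 1) ^ j" by (intro mult_le_mono2 power_mono) auto
    finally show ?thesis by (simp add: k_eq)
  qed
qed

lemma mset_eq_filter_ge_2_plus_ones:
  fixes ds :: "nat list"
  assumes "\<forall>d\<in>set ds. d \<ge> 1"
  shows "mset ds = {#d \<in># mset ds. 2 \<le> d#}
    + replicate_mset (length ds - size {#d \<in># mset ds. 2 \<le> d#}) 1"
proof -
  let ?big = "{#d \<in># mset ds. 2 \<le> d#}" and ?small = "{#d \<in># mset ds. \<not> 2 \<le> d#}"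
  have partition: "mset ds = ?big + ?small" by (rule multiset_partition)
  have "set_mset ?small \<subseteq> {1}" using assms by auto
  then have "?small = replicate_mset (size ?small) 1" by (rule set_mset_subset_singletonD)
  moreover have "size ?small = length ds - size ?big"
    using sum_length_filter_compl[of "\<lambda>d. 2 \<le> d" ds] by (simp flip: mset_filter)
  ultimately show ?thesis using partition by metis
qed

lemma sorted_desc_eq_if_mset_eq:
  fixes xs ys :: "'a :: linorder list"
  assumes "sorted_wrt (\<ge>) xs" and "sorted_wrt (\<ge>) ys" and "mset xs = mset ys"
  shows "xs = ys"
proof -
  have "sorted (rev xs)" "sorted (rev ys)" using assms(1,2) by (simp_all add: sorted_wrt_rev)
  moreover have "mset (rev xs) = mset (rev ys)" using assms(3) by simp
  ultimately have "rev xs = rev ys" by (metis properties_for_sort)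
  then show ?thesis by simp
qed

lemma M_le_card_factorisations:
  assumes "b \<ge> 1"
  shows "M s b \<le> card (factorisations b)"
proof -
  define T where "T = {ds :: nat list. length ds = s \<and> sorted_wrt (\<ge>) ds \<and>
                 (\<forall>d\<in>set ds. d \<ge> 1) \<and> ds ! 0 \<ge> 2 \<and> prod_list ds = b}"
  define f where "f ds = {#d \<in># mset ds. 2 \<le> d#}" for ds :: "nat list"
  have inj: "inj_on f T"
  proof (rule inj_onI)
    fix xs ys assume "xs \<in> T" "ys \<in> T" "f xs = f ys"
    then have "mset xs = mset ys"
      using mset_eq_filter_ge_2_plus_ones[of xs] mset_eq_filter_ge_2_plus_ones[of ys]
      by (simp add: T_def f_def)
    then show "xs = ys" using \<open>xs \<in> T\<close> \<open>ys \<in> T\<close> sorted_desc_eq_if_mset_eq by (auto simp: T_def)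
  qed
  have "f ` T \<subseteq> factorisations b"
  proof
    fix A assume "A \<in> f ` T"
    then obtain ds where ds: "ds \<in> T" "A = f ds" by blast
    then have "mset ds = A + replicate_mset (length ds - size A) 1"
      using mset_eq_filter_ge_2_plus_ones[of ds] by (simp add: T_def f_def)
    then have "prod_mset A = prod_list ds" by (metis prod_mset_prod_list prod_mset.union
          prod_mset_replicate_mset power_one mult_1_right)
    then show "A \<in> factorisations b" using ds by (simp add: T_def f_def factorisations_def)
  qed
  then have "card T \<le> card (factorisations b)"
    using card_inj_on_le inj finite_factorisations[OF assms] by blast
  then show ?thesis by (simp add: M_def T_def)
qed

lemma log_powr_log_self:
  fixes a x :: real
  assumes "1 < a" and "1 < x"
  shows "log a x powr log a x = x powr log a (log a x)"
proof -
  have "0 < log a x" using assms by simp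
  then show ?thesis using assms by (simp add: powr_def log_def)
qed

theorem lemma5p4:
  fixes b s :: nat
  assumes "b \<ge> 2" and "s \<ge> 1"
  shows "real (M s b) \<le> real b powr (log 2 (log 2 (real b)))"
proof -
  obtain k where k: "2 ^ k \<le> b" "b < 2 ^ (k + 1)"
    using ex_power_ivl1[of 2 b] assms(1) by auto
  define L where "L = log 2 (real b)"
  have "real k \<le> L" using le_log2_of_power[OF k(1)] by (simp add: L_def)
  have "1 \<le> k" using k assms(1) by (cases k) auto
  have "b \<ge> 1" using assms(1) by simp
  have "M s b \<le> k ^ k"
    using M_le_card_factorisations[OF \<open>b \<ge> 1\<close>] card_factorisations_le[OF \<open>b \<ge> 1\<close> k(2)]
    by (rule le_trans)
  then have "real (M s b) \<le> real (k ^ k)" by (rule of_nat_mono)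
  also have "\<dots> = real k powr real k" using \<open>1 \<le> k\<close> by (simp add: powr_realpow)
  also have "\<dots> \<le> L powr real k" using \<open>real k \<le> L\<close> by (simp add: powr_mono2)
  also have "\<dots> \<le> L powr L" using \<open>real k \<le> L\<close> \<open>1 \<le> k\<close> by (simp add: powr_mono)
  also have "\<dots> = real b powr (log 2 L)"
    unfolding L_def using assms(1) by (intro log_powr_log_self) auto
  finally show ?thesis by (simp add: L_def)
qed

end
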